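(* For every integer $n\ge 0$, \[ (x+1)\sum_{k=0}^{n}\binom{n}{k}\,{}_{H}w_{n-k}(x)\,w_{k}(x)={}_{H}w_{n+1}(x)+{}_{H}w_{n}(x)-w_{n+1}(x). \]
   Context: $\genfrac{\{}{\}}{0pt}{}{n}{k}$ denotes the Stirling numbers of the second kind. The geometric polynomials are $w_n(x)=\sum_{k=0}^{n}\genfrac{\{}{\}}{0pt}{}{n}{k}k!\,x^k$ (so $w_0=1$). With $H_k=\sum_{i=1}^k 1/i$, the harmonic geometric polynomials are ${}_{H}w_n(x)=\sum_{k=1}^{n}\genfrac{\{}{\}}{0pt}{}{n}{k}k!\,H_k\,x^k$ (so ${}_Hw_0=0$). *)

theory Defs
  imports "HOL-Analysis.Analysis" "HOL-Combinatorics.Stirling"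
begin

definition geom_poly :: "nat \<Rightarrow> real \<Rightarrow> real" where
  "geom_poly n x = (\<Sum>k=0..n. real (Stirling n k) * fact k * x ^ k)"

definition harm_geom_poly :: "nat \<Rightarrow> real \<Rightarrow> real" where
  "harm_geom_poly n x = (\<Sum>k=1..n. real (Stirling n k) * fact k * harm k * x ^ k)"

end

theory Submission
  imports Defs
begin

text \<open>The coefficient \<open>a(n,k) = S(n,k) k!\<close> counts surjections from an \<open>n\<close>-set onto a \<open>k\<close>-set,
  so splitting a surjection onto \<open>i + j\<close> points along the two blocks gives the binomial convolution
  \<open>\<Sum>\<^sub>k C(n,k) a(n-k,i) a(k,j) = a(n,i+j)\<close>. For geometric polynomials with arbitrary coefficient
  weights \<open>\<Sum>\<^sub>k a(n,k) c\<^sub>k x\<^sup>k\<close> this turns the binomial convolution of \<open>\<^sub>Hw\<close> and \<open>w\<close> into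
  \<open>\<Sum>\<^sub>m a(n,m) (H\<^sub>0 + \<dots> + H\<^sub>m) x\<^sup>m\<close>. On the right-hand side the recurrence
  \<open>a(n+1,k) = k (a(n,k) + a(n,k-1))\<close> writes every term through the \<open>a(n,k)\<close>, and
  \<open>H\<^sub>0 + \<dots> + H\<^sub>m = (m+1) H\<^sub>m - m\<close> makes the coefficients of \<open>a(n,m) x\<^sup>m\<close> agree.\<close>

definition ordered_Stirling :: "nat \<Rightarrow> nat \<Rightarrow> real" where
  "ordered_Stirling n k = real (Stirling n k) * fact k"

lemma ordered_Stirling_eq_0 [simp]: "n < k \<Longrightarrow> ordered_Stirling n k = 0"
  by (simp add: ordered_Stirling_def)

lemma ordered_Stirling_Suc:
  "ordered_Stirling (Suc n) k = real k * (ordered_Stirling n k + ordered_Stirling n (k - 1))"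
  by (cases k) (simp_all add: ordered_Stirling_def algebra_simps)

lemma binomial_convolution_Suc:
  fixes F G :: "nat \<Rightarrow> 'a::comm_semiring_1"
  shows "(\<Sum>k\<le>Suc n. of_nat (Suc n choose k) * F (Suc n - k) * G k)
       = (\<Sum>k\<le>n. of_nat (n choose k) * (F (Suc (n - k)) * G k + F (n - k) * G (Suc k)))"
proof -
  define H where "H k = F (Suc n - k) * G k" for k
  have "(\<Sum>k\<le>Suc n. of_nat (Suc n choose k) * F (Suc n - k) * G k)
      = H 0 + (\<Sum>k\<le>n. of_nat (Suc n choose Suc k) * H (Suc k))"
    by (subst sum.atMost_Suc_shift) (simp add: H_def mult.assoc)
  also have "\<dots> = (H 0 + (\<Sum>k\<le>n. of_nat (n choose Suc k) * H (Suc k)))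
                 + (\<Sum>k\<le>n. of_nat (n choose k) * H (Suc k))"
    by (simp add: sum.distrib algebra_simps)
  also have "H 0 + (\<Sum>k\<le>n. of_nat (n choose Suc k) * H (Suc k)) = (\<Sum>k\<le>Suc n. of_nat (n choose k) * H k)"
    by (subst sum.atMost_Suc_shift) simp
  also have "\<dots> = (\<Sum>k\<le>n. of_nat (n choose k) * H k)"
    by (simp add: binomial_eq_0)
  finally show ?thesis
    by (simp add: H_def sum.distrib algebra_simps Suc_diff_le)
qed

lemma ordered_Stirling_convolution:
  "(\<Sum>k\<le>n. real (n choose k) * ordered_Stirling (n - k) i * ordered_Stirling k j)
   = ordered_Stirling n (i + j)"
proof (induction n arbitrary: i j)
  case 0
  then show ?case by (cases i; cases j) (simp_all add: ordered_Stirling_def)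
next
  case (Suc n)
  define conv where "conv i j = (\<Sum>k\<le>n. real (n choose k) * ordered_Stirling (n - k) i * ordered_Stirling k j)" for i j
  have conv_eq: "conv i j = ordered_Stirling n (i + j)" for i j
    by (simp add: conv_def Suc.IH)
  have "(\<Sum>k\<le>Suc n. real (Suc n choose k) * ordered_Stirling (Suc n - k) i * ordered_Stirling k j)
     = (\<Sum>k\<le>n. real (n choose k) * (ordered_Stirling (Suc (n - k)) i * ordered_Stirling k j
                                     + ordered_Stirling (n - k) i * ordered_Stirling (Suc k) j))"
    by (rule binomial_convolution_Suc)
  also have "\<dots> = real i * (conv i j + conv (i - 1) j) + real j * (conv i j + conv i (j - 1))"
    by (simp add: ordered_Stirling_Suc conv_def sum.distrib sum_distrib_left algebra_simps)
  also have "\<dots> = ordered_Stirling (Suc n) (i + j)"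
    by (cases i; cases j) (simp_all add: conv_eq ordered_Stirling_Suc algebra_simps)
  finally show ?case .
qed

definition weighted_geom_poly :: "(nat \<Rightarrow> real) \<Rightarrow> nat \<Rightarrow> real \<Rightarrow> real" where
  "weighted_geom_poly c n x = (\<Sum>k\<le>n. ordered_Stirling n k * c k * x ^ k)"

lemma geom_poly_eq_weighted: "geom_poly n x = weighted_geom_poly (\<lambda>_. 1) n x"
  by (simp add: geom_poly_def weighted_geom_poly_def ordered_Stirling_def atLeast0AtMost)

lemma harm_geom_poly_eq_weighted: "harm_geom_poly n x = weighted_geom_poly harm n x"
proof -
  have "harm_geom_poly n x = (\<Sum>k=1..n. ordered_Stirling n k * harm k * x ^ k)"
    by (simp add: harm_geom_poly_def ordered_Stirling_def)
  also have "\<dots> = (\<Sum>k=0..n. ordered_Stirling n k * harm k * x ^ k)"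
    by (rule sum.mono_neutral_left) (auto simp: harm_def)
  finally show ?thesis
    by (simp add: weighted_geom_poly_def atLeast0AtMost)
qed

lemma weighted_geom_poly_eq_sum_atMost:
  "m \<le> n \<Longrightarrow> weighted_geom_poly c m x = (\<Sum>k\<le>n. ordered_Stirling m k * c k * x ^ k)"
  unfolding weighted_geom_poly_def by (rule sum.mono_neutral_left) auto

lemma weighted_geom_poly_Suc:
  "weighted_geom_poly c (Suc n) x
   = (\<Sum>k\<le>n. ordered_Stirling n k * (real k * c k + real (Suc k) * c (Suc k) * x) * x ^ k)"
proof -
  have "weighted_geom_poly c (Suc n) x
      = (\<Sum>k\<le>Suc n. ordered_Stirling n k * real k * c k * x ^ k)
        + (\<Sum>k\<le>Suc n. ordered_Stirling n (k - 1) * real k * c k * x ^ k)"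
    by (simp add: weighted_geom_poly_def ordered_Stirling_Suc sum.distrib [symmetric] algebra_simps)
  also have "(\<Sum>k\<le>Suc n. ordered_Stirling n (k - 1) * real k * c k * x ^ k)
      = (\<Sum>k\<le>n. ordered_Stirling n k * real (Suc k) * c (Suc k) * x ^ Suc k)"
    by (subst sum.atMost_Suc_shift) simp
  finally show ?thesis
    by (simp add: sum.distrib [symmetric] algebra_simps)
qed

lemma weighted_geom_poly_convolution:
  "(\<Sum>k\<le>n. real (n choose k) * weighted_geom_poly c (n - k) x * weighted_geom_poly d k x)
   = (\<Sum>m\<le>n. ordered_Stirling n m * (\<Sum>i\<le>m. c i * d (m - i)) * x ^ m)"
proof -
  define t where "t i j = c i * d j * x ^ (i + j)" for i j
  have product: "weighted_geom_poly c (n - k) x * weighted_geom_poly d k x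
      = (\<Sum>i\<le>n. \<Sum>j\<le>n. ordered_Stirling (n - k) i * ordered_Stirling k j * t i j)" if "k \<le> n" for k
    unfolding weighted_geom_poly_eq_sum_atMost [OF diff_le_self] weighted_geom_poly_eq_sum_atMost [OF that] sum_product
    by (intro sum.cong refl) (simp add: t_def power_add mult_ac)
  have "(\<Sum>k\<le>n. real (n choose k) * weighted_geom_poly c (n - k) x * weighted_geom_poly d k x)
      = (\<Sum>k\<le>n. \<Sum>i\<le>n. \<Sum>j\<le>n. real (n choose k) * ordered_Stirling (n - k) i * ordered_Stirling k j * t i j)"
    by (intro sum.cong refl) (simp add: product sum_distrib_left mult.assoc)
  also have "\<dots> = (\<Sum>i\<le>n. \<Sum>k\<le>n. \<Sum>j\<le>n. real (n choose k) * ordered_Stirling (n - k) i * ordered_Stirling k j * t i j)"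
    by (rule sum.swap)
  also have "\<dots> = (\<Sum>i\<le>n. \<Sum>j\<le>n. \<Sum>k\<le>n. real (n choose k) * ordered_Stirling (n - k) i * ordered_Stirling k j * t i j)"
    by (rule sum.cong [OF refl], rule sum.swap)
  also have "\<dots> = (\<Sum>(i, j)\<in>{..n} \<times> {..n}. ordered_Stirling n (i + j) * t i j)"
    by (simp add: sum.cartesian_product sum_distrib_right [symmetric] ordered_Stirling_convolution)
  also have "\<dots> = (\<Sum>(i, j)\<in>{(i, j). i + j \<le> n}. ordered_Stirling n (i + j) * t i j)"
    by (rule sum.mono_neutral_right) (auto, metis ordered_Stirling_eq_0 not_le)
  also have "\<dots> = (\<Sum>m\<le>n. \<Sum>i\<le>m. ordered_Stirling n m * t i (m - i))"
    by (simp add: sum.triangle_reindex_eq)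
  finally show ?thesis
    by (simp add: t_def sum_distrib_left sum_distrib_right mult_ac)
qed

lemma sum_harm_atMost: "(\<Sum>i\<le>m. harm i :: real) = real (Suc m) * harm m - real m"
proof (induction m)
  case 0
  then show ?case by (simp add: harm_def)
next
  case (Suc m)
  have "(\<Sum>i\<le>Suc m. harm i :: real) = real (Suc m) * harm m - real m + harm (Suc m)"
    using Suc.IH by simp
  also have "\<dots> = real (Suc (Suc m)) * harm (Suc m) - real (Suc m)"
    by (simp add: harm_Suc field_simps)
  finally show ?case .
qed

theorem lemma1:
  fixes n :: nat and x :: real
  shows "(x + 1) * (\<Sum>k=0..n. real (n choose k) * harm_geom_poly (n - k) x * geom_poly k x)
         = harm_geom_poly (Suc n) x + harm_geom_poly n x - geom_poly (Suc n) x"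
proof -
  define c where "c m = real (Suc m) * harm m - real m" for m
  have convolution: "(\<Sum>k=0..n. real (n choose k) * harm_geom_poly (n - k) x * geom_poly k x)
      = (\<Sum>m\<le>n. ordered_Stirling n m * c m * x ^ m)"
    by (simp add: atLeast0AtMost harm_geom_poly_eq_weighted geom_poly_eq_weighted
        weighted_geom_poly_convolution sum_harm_atMost c_def)
  have "harm_geom_poly (Suc n) x + harm_geom_poly n x - geom_poly (Suc n) x
      = (\<Sum>m\<le>n. ordered_Stirling n m * (real m * harm m + real (Suc m) * harm (Suc m) * x
                                          + harm m - (real m + real (Suc m) * x)) * x ^ m)"
    unfolding harm_geom_poly_eq_weighted geom_poly_eq_weighted weighted_geom_poly_Suc
    by (simp add: weighted_geom_poly_def sum.distrib [symmetric] sum_subtractf [symmetric] algebra_simps)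
  also have "\<dots> = (x + 1) * (\<Sum>m\<le>n. ordered_Stirling n m * c m * x ^ m)"
    unfolding sum_distrib_left by (intro sum.cong refl) (simp add: c_def harm_Suc field_simps)
  finally show ?thesis
    by (simp add: convolution)
qed

end
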